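(* Let $D \in \mathbb{R}^{m \times n}$, let $Q \in \mathbb{Z}^{m\times n}$ be such that for each $j$ the $j$th column of $Q$ stores the sorting of the $j$th column of $D$, and let $(a_1,\ldots,a_p)$ be a sequence with $a_k \in \{0,\ldots,n-1\}$ for all $k$. Then QuickLexSort$(D,Q,(a_1,\ldots,a_p))$ returns the ranking vector of the lexicographical sorting of the sub-matrix of $D$ determined by the sequence of columns $(a_1,\ldots,a_p)$.
   Context: Rows of $D$ are indexed by $\{0,\ldots,m-1\}$, columns by $\{0,\ldots,n-1\}$. "The $j$th column of $Q$ stores the sorting of the $j$th column of $D$" means $(Q_{0j},\ldots,Q_{m-1,j})$ is a permutation of $\{0,\ldots,m-1\}$ with $D_{Q_{0j},j} \le \cdots \le D_{Q_{m-1,j},j}$. For a sequence of columns $(b_1,\ldots,b_q)$, the sub-matrix determined by it has row $r$ equal to $(D_{r b_1},\ldots,D_{r b_q})$; rows are compared lexicographically ($v <_{\mathrm{lex}} w$ iff $v_1<w_1$, or $v_1=w_1,\ldots,v_k=w_k$ and $v_{k+1}<w_{k+1}$ for some $k$). The ranking vector of this ordering is the unique $L \in \{0,\ldots,m-1\}^m$ such that equal rows get equal values, a lexicographically smaller row gets a strictly smaller value, and $\sum_r L_r$ is minimal (equivalently, $L_r$ is the number of distinct rows strictly lexicographically smaller than row $r$). QuickLexSortRefine$(D,Q,i,L)$: initialize integer arrays $\mathrm{IDval},\mathrm{IDvalInit},\mathrm{subID},\mathrm{newCount},\mathrm{numNewID}$ of length $m$ to zero. For $j=0,\ldots,m-1$: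 let $r := Q[j,i]$, $\ell := L[r]$; if $\mathrm{IDvalInit}[\ell]=0$, set $\mathrm{IDvalInit}[\ell]:=1$, $\mathrm{IDval}[\ell]:=D[r,i]$; otherwise if $\mathrm{IDval}[\ell]\neq D[r,i]$, set $\mathrm{IDval}[\ell]:=D[r,i]$ and increment $\mathrm{newCount}[\ell]$; then set $\mathrm{subID}[r]:=\mathrm{newCount}[\ell]$. Set $\mathrm{numNewID}[m-1]:=\sum_{j=0}^{m-2}\mathrm{newCount}[j]$ and for $j=m-2,\ldots,1$, $\mathrm{numNewID}[j]:=\mathrm{numNewID}[j+1]-\mathrm{newCount}[j]$ ($\mathrm{numNewID}[0]=0$). Return $L'$ with $L'[j]:=L[j]+\mathrm{numNewID}[L[j]]+\mathrm{subID}[j]$ for $j=0,\ldots,m-1$. QuickLexSort$(D,Q,(a_1,\ldots,a_p))$: set $L'$ to the zero vector of length $m$; for $k=1,\ldots,p$ in order, set $L' := $ QuickLexSortRefine$(D,Q,a_k,L')$; return $L'$. *)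

theory Defs
  imports Complex_Main
begin

text \<open>Matrices are functions nat => nat => _ (row, column); only indices below the
  dimensions m (rows) and n (columns) are relevant. Vectors of length m are nat => nat.\<close>

definition col_sorting :: "nat \<Rightarrow> (nat \<Rightarrow> nat \<Rightarrow> real) \<Rightarrow> (nat \<Rightarrow> nat \<Rightarrow> nat) \<Rightarrow> nat \<Rightarrow> bool" where
  "col_sorting m D Q j \<longleftrightarrow>
     bij_betw (\<lambda>k. Q k j) {..<m} {..<m} \<and>
     (\<forall>k. Suc k < m \<longrightarrow> D (Q k j) j \<le> D (Q (Suc k) j) j)"

definition lex_less :: "real list \<Rightarrow> real list \<Rightarrow> bool" where
  "lex_less v w \<longleftrightarrow>
     (\<exists>k. Suc k \<le> length v \<and> Suc k \<le> length w \<and>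
          (\<forall>i<k. v ! i = w ! i) \<and> v ! k < w ! k)"

definition sub_row :: "(nat \<Rightarrow> nat \<Rightarrow> real) \<Rightarrow> nat list \<Rightarrow> nat \<Rightarrow> real list" where
  "sub_row D bs r = map (\<lambda>b. D r b) bs"

definition ranking_vector :: "nat \<Rightarrow> (nat \<Rightarrow> nat \<Rightarrow> real) \<Rightarrow> nat list \<Rightarrow> nat \<Rightarrow> nat" where
  "ranking_vector m D bs r =
     card {sub_row D bs s | s. s < m \<and> lex_less (sub_row D bs s) (sub_row D bs r)}"

type_synonym qls_state = "(nat \<Rightarrow> real) \<times> (nat \<Rightarrow> nat) \<times> (nat \<Rightarrow> nat) \<times> (nat \<Rightarrow> nat)"

definition qls_step :: "(nat \<Rightarrow> nat \<Rightarrow> real) \<Rightarrow> (nat \<Rightarrow> nat \<Rightarrow> nat) \<Rightarrow> nat \<Rightarrow> (nat \<Rightarrow> nat)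
    \<Rightarrow> nat \<Rightarrow> qls_state \<Rightarrow> qls_state" where
  "qls_step D Q i L j st =
     (let (IDval, IDvalInit, subID, newCount) = st;
          r = Q j i; l = L r;
          (IDval', IDvalInit', newCount') =
            (if IDvalInit l = 0 then (IDval(l := D r i), IDvalInit(l := 1), newCount)
             else if IDval l \<noteq> D r i then (IDval(l := D r i), IDvalInit, newCount(l := newCount l + 1))
             else (IDval, IDvalInit, newCount))
      in (IDval', IDvalInit', subID(r := newCount' l), newCount'))"

definition quick_lex_sort_refine :: "nat \<Rightarrow> (nat \<Rightarrow> nat \<Rightarrow> real) \<Rightarrow> (nat \<Rightarrow> nat \<Rightarrow> nat)
    \<Rightarrow> nat \<Rightarrow> (nat \<Rightarrow> nat) \<Rightarrow> (nat \<Rightarrow> nat)" where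
  "quick_lex_sort_refine m D Q i L =
     (let (IDval, IDvalInit, subID, newCount) =
            fold (qls_step D Q i L) [0..<m] (\<lambda>_. 0, \<lambda>_. 0, \<lambda>_. 0, \<lambda>_. 0);
          numNewID = (\<lambda>l. \<Sum>j<l. newCount j)
      in (\<lambda>j. if j < m then L j + numNewID (L j) + subID j else 0))"

definition quick_lex_sort :: "nat \<Rightarrow> (nat \<Rightarrow> nat \<Rightarrow> real) \<Rightarrow> (nat \<Rightarrow> nat \<Rightarrow> nat)
    \<Rightarrow> nat list \<Rightarrow> (nat \<Rightarrow> nat)" where
  "quick_lex_sort m D Q as = fold (quick_lex_sort_refine m D Q) as (\<lambda>_. 0)"

end

theory Submission
  imports Defs "HOL-Library.List_Lexorder" "HOL-Library.Product_Lexorder"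
begin

text \<open>Write L for the ranking vector of the first k chosen columns, i.e. the dense rank of the
  sub-rows. The dense rank for k+1 columns is the dense rank of the pairs (L r, D r a) in the
  lexicographic order, which counts the distinct values of column a in every class l < L r plus
  the distinct values below D r a in the class of r. The refinement loop visits the rows in
  increasing order of column a, so after any number of steps its state is determined by the set
  of visited rows: for each class, the largest value seen so far and the number of distinct
  values seen so far minus one. The returned vector is then exactly the count above.\<close>

lemma lex_less_iff_less:
  assumes "length v = length w"
  shows "lex_less v w \<longleftrightarrow> v < w"
proof -
  have "take k v = take k w \<longleftrightarrow> (\<forall>i<k. v ! i = w ! i)" if "k < length v" for k
    using that assms by (simp add: list_eq_iff_nth_eq)
  then show ?thesis
    using assms by (auto simp: lex_less_def list_less_def lexord_take_index_conv Suc_le_eq)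
qed

lemma less_append_singleton_iff:
  fixes xs ys :: "'a::order list"
  assumes "length xs = length ys"
  shows "xs @ [x] < ys @ [y] \<longleftrightarrow> (xs, x) < (ys, y)"
  using assms
proof (induction xs arbitrary: ys)
  case (Cons a xs)
  then show ?case by (cases ys) (auto simp: less_prod_def')
qed (simp add: less_prod_def')

definition dense_rank :: "'b set \<Rightarrow> ('b \<Rightarrow> 'a::linorder) \<Rightarrow> 'b \<Rightarrow> nat" where
  "dense_rank S k r = card {x \<in> k ` S. x < k r}"

lemma strict_mono_on_card_less:
  fixes A :: "'a::linorder set"
  assumes "finite A"
  shows "strict_mono_on A (\<lambda>c. card {x \<in> A. x < c})"
proof (rule strict_mono_onI)
  fix c d assume "c \<in> A" "d \<in> A" "c < d"
  then have "{x \<in> A. x < c} \<subset> {x \<in> A. x < d}" by auto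
  then show "card {x \<in> A. x < c} < card {x \<in> A. x < d}"
    using assms by (intro psubset_card_mono) auto
qed

lemma bij_betw_card_less:
  fixes A :: "'a::linorder set"
  assumes "finite A"
  shows "bij_betw (\<lambda>c. card {x \<in> A. x < c}) A {..<card A}"
proof -
  let ?f = "\<lambda>c. card {x \<in> A. x < c}"
  have inj: "inj_on ?f A"
    using strict_mono_on_imp_inj_on[OF strict_mono_on_card_less[OF assms]] .
  have "?f c < card A" if "c \<in> A" for c
    using assms that by (intro psubset_card_mono) auto
  then have "?f ` A \<subseteq> {..<card A}" by auto
  moreover have "card (?f ` A) = card {..<card A}"
    using card_image[OF inj] by simp
  ultimately show ?thesis
    using inj by (simp add: bij_betw_def card_subset_eq)
qed

lemma dense_rank_less_iff:
  assumes "finite S" "s \<in> S" "t \<in> S"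
  shows "dense_rank S k s < dense_rank S k t \<longleftrightarrow> k s < k t"
  using strict_mono_on_less[OF strict_mono_on_card_less[of "k ` S"]] assms
  by (simp add: dense_rank_def)

lemma eq_iff_eq_if_less_iff_less:
  fixes a b :: "'a::linorder" and c d :: "'b::linorder"
  assumes "a < b \<longleftrightarrow> c < d" "b < a \<longleftrightarrow> d < c"
  shows "a = b \<longleftrightarrow> c = d"
  using assms by (metis linorder_neq_iff)

lemma dense_rank_eq_iff:
  assumes "finite S" "s \<in> S" "t \<in> S"
  shows "dense_rank S k s = dense_rank S k t \<longleftrightarrow> k s = k t"
  using assms by (intro eq_iff_eq_if_less_iff_less dense_rank_less_iff)

lemma ex_dense_rank_eq:
  assumes "finite S" "r \<in> S" "l < dense_rank S k r"
  shows "\<exists>s\<in>S. dense_rank S k s = l"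
proof -
  have bij: "bij_betw (\<lambda>c. card {x \<in> k ` S. x < c}) (k ` S) {..<card (k ` S)}"
    using assms(1) by (intro bij_betw_card_less) simp
  then have "dense_rank S k r < card (k ` S)"
    using assms(2) unfolding dense_rank_def by (auto dest: bij_betw_apply)
  then have "l \<in> (\<lambda>c. card {x \<in> k ` S. x < c}) ` k ` S"
    using assms(3) bij by (simp add: bij_betw_def)
  then show ?thesis by (auto simp: dense_rank_def)
qed

lemma card_image_eq_if_same_fibres:
  assumes "\<forall>s\<in>A. \<forall>t\<in>A. f s = f t \<longleftrightarrow> g s = g t"
  shows "card (f ` A) = card (g ` A)"
proof -
  let ?P = "(\<lambda>s. (f s, g s)) ` A"
  have "inj_on fst ?P" "inj_on snd ?P"
    using assms by (auto simp: inj_on_def)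
  moreover have "fst ` ?P = f ` A" "snd ` ?P = g ` A"
    by (simp_all add: image_image)
  ultimately show ?thesis by (metis card_image)
qed

lemma dense_rank_eq_card_image: "dense_rank S k r = card (k ` {s \<in> S. k s < k r})"
proof -
  have "{x \<in> k ` S. x < k r} = k ` {s \<in> S. k s < k r}" by auto
  then show ?thesis by (simp add: dense_rank_def)
qed

lemma dense_rank_cong:
  fixes K :: "'b \<Rightarrow> 'a::linorder" and K' :: "'b \<Rightarrow> 'c::linorder"
  assumes "\<forall>s\<in>S. \<forall>t\<in>S. K s < K t \<longleftrightarrow> K' s < K' t" "r \<in> S"
  shows "dense_rank S K r = dense_rank S K' r"
proof -
  let ?T = "{s \<in> S. K s < K r}"
  have T: "{s \<in> S. K' s < K' r} = ?T"
    using assms by auto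
  have "\<forall>s\<in>?T. \<forall>t\<in>?T. K s = K t \<longleftrightarrow> K' s = K' t"
    using assms(1) by (auto intro!: eq_iff_eq_if_less_iff_less)
  then have "card (K ` ?T) = card (K' ` ?T)"
    by (rule card_image_eq_if_same_fibres)
  then show ?thesis
    by (simp only: dense_rank_eq_card_image T)
qed

definition class_values :: "('b \<Rightarrow> 'a) \<Rightarrow> ('b \<Rightarrow> nat) \<Rightarrow> 'b set \<Rightarrow> nat \<Rightarrow> 'a set" where
  "class_values v L S l = v ` {s \<in> S. L s = l}"

lemma dense_rank_pair:
  fixes L :: "'b \<Rightarrow> nat" and v :: "'b \<Rightarrow> 'a::linorder"
  assumes "finite S"
  shows "dense_rank S (\<lambda>s. (L s, v s)) r =
    (\<Sum>l<L r. card (class_values v L S l)) + card {x \<in> class_values v L S (L r). x < v r}"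
proof -
  let ?A = "SIGMA l:{..<L r}. class_values v L S l"
  let ?B = "{L r} \<times> {x \<in> class_values v L S (L r). x < v r}"
  have "{p \<in> (\<lambda>s. (L s, v s)) ` S. p < (L r, v r)} = ?A \<union> ?B"
    by (auto simp: class_values_def less_prod_def' image_iff; metis)
  moreover have "finite (class_values v L S l)" for l
    using assms by (simp add: class_values_def)
  moreover have "?A \<inter> ?B = {}" by auto
  ultimately show ?thesis
    unfolding dense_rank_def
    by (simp add: card_Un_disjoint card_cartesian_product_singleton)
qed

text \<open>Truncated subtraction makes the newCount entry 0 for classes not visited yet.\<close>

definition qls_state_of :: "(nat \<Rightarrow> real) \<Rightarrow> (nat \<Rightarrow> nat) \<Rightarrow> nat set \<Rightarrow> qls_state" where
  "qls_state_of v L P =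
     (\<lambda>l. if class_values v L P l = {} then 0 else Max (class_values v L P l),
      \<lambda>l. if class_values v L P l = {} then 0 else 1,
      \<lambda>q. if q \<in> P then card {x \<in> class_values v L P (L q). x < v q} else 0,
      \<lambda>l. card (class_values v L P l) - 1)"

lemma qls_state_of_empty: "qls_state_of v L {} = (\<lambda>_. 0, \<lambda>_. 0, \<lambda>_. 0, \<lambda>_. 0)"
  by (simp add: qls_state_of_def class_values_def)

lemma class_values_insert:
  "class_values v L (insert r P) l =
     (if l = L r then insert (v r) (class_values v L P l) else class_values v L P l)"
  by (auto simp: class_values_def)

lemma qls_state_of_insert:
  assumes "finite P" "r \<notin> P" "\<forall>s\<in>P. v s \<le> v r"
    and "qls_state_of v L P = (IDval, Init, sub, nc)"
  defines "c \<equiv> card (insert (v r) (class_values v L P (L r))) - 1"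
  shows "qls_state_of v L (insert r P) = (IDval(L r := v r), Init(L r := 1), sub(r := c), nc(L r := c))"
proof -
  let ?V = "class_values v L P" and ?W = "class_values v L (insert r P)"
  have W: "?W l = (if l = L r then insert (v r) (?V l) else ?V l)" for l
    by (rule class_values_insert)
  have fin: "finite (?V l)" for l
    using assms(1) by (simp add: class_values_def)
  have le: "\<forall>x\<in>?V l. x \<le> v r" for l
    using assms(3) by (auto simp: class_values_def)
  have st: "IDval = (\<lambda>l. if ?V l = {} then 0 else Max (?V l))"
    "Init = (\<lambda>l. if ?V l = {} then 0 else 1)"
    "sub = (\<lambda>q. if q \<in> P then card {x \<in> ?V (L q). x < v q} else 0)"
    "nc = (\<lambda>l. card (?V l) - 1)"
    using assms(4) by (simp_all add: qls_state_of_def)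
  have "Max (insert (v r) (?V (L r))) = v r"
    using fin le by (intro Max_eqI) auto
  then have IDval: "(\<lambda>l. if ?W l = {} then 0 else Max (?W l)) = IDval(L r := v r)"
    by (intro ext) (simp add: W st(1))
  have Init: "(\<lambda>l. if ?W l = {} then 0 else 1) = Init(L r := 1)"
    by (intro ext) (simp add: W st(2))
  have nc: "(\<lambda>l. card (?W l) - 1) = nc(L r := c)"
    by (intro ext) (simp add: W st(4) c_def)
  have "{x \<in> insert (v r) (?V (L r)). x < v r} = insert (v r) (?V (L r)) - {v r}"
    using le[of "L r"] by (auto simp: less_le)
  then have sub_r: "card {x \<in> ?W (L r). x < v r} = c"
    using fin by (simp add: W c_def card_Diff_singleton_if card_insert_if)
  have sub_P: "card {x \<in> ?W (L q). x < v q} = sub q" if "q \<in> P" for q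
  proof -
    have "{x \<in> ?W (L q). x < v q} = {x \<in> ?V (L q). x < v q}"
      using that assms(3) by (auto simp: W)
    then show ?thesis using that by (simp add: st(3))
  qed
  have sub: "(\<lambda>q. if q \<in> insert r P then card {x \<in> ?W (L q). x < v q} else 0) = sub(r := c)"
    using assms(2) sub_r sub_P by (intro ext) (simp add: st(3))
  show ?thesis
    using IDval Init sub nc by (simp add: qls_state_of_def)
qed

lemma qls_step_eq:
  "qls_step D Q i L t (IDval, Init, sub, nc) =
    (let r = Q t i; l = L r; x = D r i in
     if Init l = 0 then (IDval(l := x), Init(l := 1), sub(r := nc l), nc)
     else if IDval l \<noteq> x then (IDval(l := x), Init, sub(r := nc l + 1), nc(l := nc l + 1))
     else (IDval, Init, sub(r := nc l), nc))"
  by (simp add: qls_step_def Let_def)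

lemma qls_step_qls_state_of:
  assumes "finite P" "Q t i \<notin> P" "\<forall>s\<in>P. D s i \<le> D (Q t i) i"
  shows "qls_step D Q i L t (qls_state_of (\<lambda>s. D s i) L P) =
    qls_state_of (\<lambda>s. D s i) L (insert (Q t i) P)"
proof -
  define r x V where "r = Q t i" and "x = D r i" and "V = class_values (\<lambda>s. D s i) L P (L r)"
  obtain IDval Init sub nc where st: "qls_state_of (\<lambda>s. D s i) L P = (IDval, Init, sub, nc)"
    by (metis prod_cases4)
  have fin: "finite V" using assms(1) by (simp add: V_def class_values_def)
  have le: "\<forall>y\<in>V. y \<le> x" using assms(3) by (auto simp: V_def x_def r_def class_values_def)
  have "Init = (\<lambda>l. if class_values (\<lambda>s. D s i) L P l = {} then 0 else 1)"
    "IDval = (\<lambda>l. if class_values (\<lambda>s. D s i) L P l = {} then 0 else Max (class_values (\<lambda>s. D s i) L P l))"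
    "nc = (\<lambda>l. card (class_values (\<lambda>s. D s i) L P l) - 1)"
    using st by (simp_all add: qls_state_of_def)
  then have Init: "Init (L r) = (if V = {} then 0 else 1)"
    and IDval: "V \<noteq> {} \<Longrightarrow> IDval (L r) = Max V"
    and nc: "nc (L r) = card V - 1"
    by (simp_all add: V_def)
  have step: "qls_step D Q i L t (IDval, Init, sub, nc) =
     (if Init (L r) = 0 then (IDval(L r := x), Init(L r := 1), sub(r := nc (L r)), nc)
      else if IDval (L r) \<noteq> x then (IDval(L r := x), Init, sub(r := nc (L r) + 1), nc(L r := nc (L r) + 1))
      else (IDval, Init, sub(r := nc (L r)), nc))"
    unfolding qls_step_eq Let_def r_def[symmetric] x_def[symmetric] ..
  have "qls_step D Q i L t (IDval, Init, sub, nc) =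
      (IDval(L r := x), Init(L r := 1), sub(r := card (insert x V) - 1), nc(L r := card (insert x V) - 1))"
  proof (cases "V = {}")
    case True
    then show ?thesis using Init nc by (simp add: step fun_upd_idem)
  next
    case nonempty: False
    show ?thesis
    proof (cases "x \<in> V")
      case True
      then have "Max V = x" using fin le by (intro Max_eqI) auto
      then show ?thesis using True Init IDval nc nonempty
        by (simp add: step insert_absorb fun_upd_idem)
    next
      case False
      then have "Max V \<noteq> x" using fin nonempty Max_in by metis
      moreover have "card V - 1 + 1 = card (insert x V) - 1"
        using False fin nonempty by (simp add: card_gt_0_iff)
      ultimately show ?thesis using Init IDval nc nonempty
        by (simp add: step fun_upd_idem)
    qed
  qed
  also have "\<dots> = qls_state_of (\<lambda>s. D s i) L (insert r P)"
    using qls_state_of_insert[OF assms(1) _ _ st, of r] assms(2,3)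
    unfolding r_def[symmetric] x_def[symmetric] V_def[symmetric] by simp
  finally show ?thesis unfolding st r_def .
qed

lemma col_sorting_mono:
  assumes "col_sorting m D Q i" "j \<le> t" "t < m"
  shows "D (Q j i) i \<le> D (Q t i) i"
  using assms(2,3)
proof (induction t rule: dec_induct)
  case (step n)
  then show ?case using assms(1) unfolding col_sorting_def by (meson Suc_lessD order_trans)
qed simp

lemma fold_qls_step:
  assumes "col_sorting m D Q i" "t \<le> m"
  shows "fold (qls_step D Q i L) [0..<t] (\<lambda>_. 0, \<lambda>_. 0, \<lambda>_. 0, \<lambda>_. 0) =
    qls_state_of (\<lambda>s. D s i) L ((\<lambda>j. Q j i) ` {..<t})"
  using assms(2)
proof (induction t)
  case 0
  then show ?case by (simp add: qls_state_of_empty)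
next
  case (Suc t)
  have "inj_on (\<lambda>j. Q j i) {..<m}"
    using assms(1) by (simp add: col_sorting_def bij_betw_def)
  then have "Q t i \<notin> (\<lambda>j. Q j i) ` {..<t}"
    using Suc.prems by (auto dest: inj_onD)
  moreover have "\<forall>s\<in>(\<lambda>j. Q j i) ` {..<t}. D s i \<le> D (Q t i) i"
    using col_sorting_mono[OF assms(1)] Suc.prems by auto
  ultimately show ?case
    using Suc qls_step_qls_state_of[of "(\<lambda>j. Q j i) ` {..<t}"] by (simp add: lessThan_Suc)
qed

lemma quick_lex_sort_refine_eq_dense_rank:
  assumes "col_sorting m D Q i" "\<forall>r<m. \<forall>l<L r. \<exists>s<m. L s = l" "r < m"
  shows "quick_lex_sort_refine m D Q i L r = dense_rank {..<m} (\<lambda>s. (L s, D s i)) r"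
proof -
  let ?V = "class_values (\<lambda>s. D s i) L {..<m}"
  have "(\<lambda>j. Q j i) ` {..<m} = {..<m}"
    using assms(1) by (simp add: col_sorting_def bij_betw_def)
  then have "quick_lex_sort_refine m D Q i L r =
      L r + (\<Sum>l<L r. card (?V l) - 1) + card {x \<in> ?V (L r). x < D r i}"
    using fold_qls_step[OF assms(1) order.refl, of L] assms(3)
    by (simp add: quick_lex_sort_refine_def qls_state_of_def)
  moreover have "L r + (\<Sum>l<L r. card (?V l) - 1) = (\<Sum>l<L r. card (?V l))"
  proof -
    have "card (?V l) \<ge> 1" if "l < L r" for l
      using assms(2,3) that by (fastforce simp: class_values_def card_gt_0_iff Suc_le_eq)
    then have "(\<Sum>l<L r. card (?V l)) = (\<Sum>l<L r. (card (?V l) - 1) + 1)"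
      by (intro sum.cong refl) (simp add: Suc_le_eq)
    then show ?thesis by (simp add: sum_Suc)
  qed
  ultimately show ?thesis
    by (simp add: dense_rank_pair)
qed

lemma ranking_vector_eq_dense_rank:
  "ranking_vector m D bs r = dense_rank {..<m} (sub_row D bs) r"
proof -
  have "{sub_row D bs s | s. s < m \<and> lex_less (sub_row D bs s) (sub_row D bs r)} =
      {x \<in> sub_row D bs ` {..<m}. x < sub_row D bs r}"
    by (auto simp: lex_less_iff_less sub_row_def)
  then show ?thesis by (simp add: ranking_vector_def dense_rank_def)
qed

lemma less_sub_row_snoc_iff:
  "sub_row D (bs @ [a]) s < sub_row D (bs @ [a]) t \<longleftrightarrow>
    (sub_row D bs s, D s a) < (sub_row D bs t, D t a)"
  by (simp add: sub_row_def less_append_singleton_iff)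

lemma quick_lex_sort_snoc:
  assumes "col_sorting m D Q a"
    and "\<forall>r<m. quick_lex_sort m D Q bs r = dense_rank {..<m} (sub_row D bs) r"
  shows "\<forall>r<m. quick_lex_sort m D Q (bs @ [a]) r = dense_rank {..<m} (sub_row D (bs @ [a])) r"
proof (intro allI impI)
  fix r assume "r < m"
  let ?L = "quick_lex_sort m D Q bs"
  have "\<forall>r<m. \<forall>l<?L r. \<exists>s<m. ?L s = l"
  proof (intro allI impI)
    fix r' l assume "r' < m" "l < ?L r'"
    then obtain s where "s < m" "dense_rank {..<m} (sub_row D bs) s = l"
      using ex_dense_rank_eq[of "{..<m}" r' l] assms(2) by auto
    then show "\<exists>s<m. ?L s = l" using assms(2) by auto
  qed
  then have "quick_lex_sort m D Q (bs @ [a]) r = dense_rank {..<m} (\<lambda>s. (?L s, D s a)) r"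
    using quick_lex_sort_refine_eq_dense_rank[OF assms(1) _ \<open>r < m\<close>]
    by (simp add: quick_lex_sort_def)
  also have "\<dots> = dense_rank {..<m} (sub_row D (bs @ [a])) r"
  proof (rule dense_rank_cong)
    show "\<forall>s\<in>{..<m}. \<forall>t\<in>{..<m}. (?L s, D s a) < (?L t, D t a) \<longleftrightarrow>
        sub_row D (bs @ [a]) s < sub_row D (bs @ [a]) t"
      using assms(2) by (simp add: less_sub_row_snoc_iff less_prod_def' dense_rank_less_iff dense_rank_eq_iff)
  qed (use \<open>r < m\<close> in simp)
  finally show "quick_lex_sort m D Q (bs @ [a]) r = dense_rank {..<m} (sub_row D (bs @ [a])) r" .
qed

theorem mainTheorem3:
  fixes m n :: nat and D :: "nat \<Rightarrow> nat \<Rightarrow> real" and Q :: "nat \<Rightarrow> nat \<Rightarrow> nat"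
    and as :: "nat list"
  assumes "\<forall>j<n. col_sorting m D Q j"
    and "\<forall>a\<in>set as. a < n"
  shows "\<forall>r<m. quick_lex_sort m D Q as r = ranking_vector m D as r"
proof -
  have "\<forall>r<m. quick_lex_sort m D Q as r = dense_rank {..<m} (sub_row D as) r"
    using assms(2)
  proof (induction as rule: rev_induct)
    case Nil
    then show ?case by (simp add: quick_lex_sort_def dense_rank_def sub_row_def)
  next
    case (snoc a bs)
    then show ?case using assms(1) quick_lex_sort_snoc by simp
  qed
  then show ?thesis by (simp add: ranking_vector_eq_dense_rank)
qed

end
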